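(* Let $\Upsilon$ be a Coxeter graph and $W=W(\Upsilon)$ the associated Coxeter group, and suppose the abelianization of $W$ is $\mathbb{Z}_2$. Then there exists a labeled oriented tree $\Gamma$ of Coxeter type, which can moreover be chosen to be prime, such that $G(\Gamma)$ maps onto $W$.
   Context: A Coxeter graph $\Upsilon$ is a finite simplicial graph with vertex set $\mathbf{x}$ whose edges $e$ carry integer labels $m_e\ge 2$; $W(\Upsilon)=\langle \mathbf{x}\mid x^2\ (x\in\mathbf{x}),\ (xy)^{m_e}\text{ for each edge }e=\{x,y\}\rangle$. A labeled oriented tree (LOT) $\Gamma$ is a finite tree with vertex set $\mathbf{x}$ whose edges are oriented and each edge is labeled by a (possibly empty) word $w$ in $\mathbf{x}^{\pm1}$; for the edge $e=(x\xrightarrow{w}y)$ from $x$ to $y$ labeled $w$, set $r_e=xw(wy)^{-1}$; $G(\Gamma)=\langle\mathbf{x}\mid r_e,\ e\text{ an edge}\rangle$. $\Gamma$ is of Coxeter type if for every edge $e=(x\xrightarrow{w}y)$ every letter $z\ne x,y$ occurs in $w$ only with even exponents. A subLOT of $\Gamma$ is a subtree $\Gamma'$ such that all letters in the labels of edges of $\Gamma'$ are vertices of $\Gamma'$; $\Gamma$ is prime if it has no subLOT other than $\Gamma$ itself and single vertices. *)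

theory Defs
  imports "HOL-Algebra.Algebra"
begin

text \<open>A word over a generating set is a list of syllables (z, k), standing for z^k
  (k an integer exponent).\<close>
type_synonym 'x word = "('x \<times> int) list"

definition words :: "'x set \<Rightarrow> 'x word set" where
  "words S = {w. fst ` set w \<subseteq> S}"

definition inv_word :: "'x word \<Rightarrow> 'x word" where
  "inv_word w = rev (map (\<lambda>(z, k). (z, - k)) w)"

text \<open>The congruence on words over S generated by the relators R (together with the
  free-group rules for syllables): two words are equivalent iff they represent the same
  element of the group with presentation (S | R).\<close>
inductive_set pres_cong :: "'x set \<Rightarrow> 'x word set \<Rightarrow> ('x word \<times> 'x word) set"
  for S :: "'x set" and R :: "'x word set" where
  refl: "w \<in> words S \<Longrightarrow> (w, w) \<in> pres_cong S R"
| sym: "(u, v) \<in> pres_cong S R \<Longrightarrow> (v, u) \<in> pres_cong S R"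
| trans: "(u, v) \<in> pres_cong S R \<Longrightarrow> (v, w) \<in> pres_cong S R \<Longrightarrow> (u, w) \<in> pres_cong S R"
| ctxt: "(u, v) \<in> pres_cong S R \<Longrightarrow> a \<in> words S \<Longrightarrow> b \<in> words S
         \<Longrightarrow> (a @ u @ b, a @ v @ b) \<in> pres_cong S R"
| rel: "r \<in> R \<Longrightarrow> r \<in> words S \<Longrightarrow> (r, []) \<in> pres_cong S R"
| merge: "z \<in> S \<Longrightarrow> ([(z, k), (z, l)], [(z, k + l)]) \<in> pres_cong S R"
| zero: "z \<in> S \<Longrightarrow> ([(z, 0)], []) \<in> pres_cong S R"

definition pres_group :: "'x set \<Rightarrow> 'x word set \<Rightarrow> 'x word set monoid" where
  "pres_group S R =
     \<lparr> carrier = words S // pres_cong S R,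
       monoid.mult = (\<lambda>A B. \<Union>a\<in>A. \<Union>b\<in>B. pres_cong S R `` {a @ b}),
       one = pres_cong S R `` {[]} \<rparr>"

definition coxeter_graph :: "'x set \<Rightarrow> 'x set set \<Rightarrow> ('x set \<Rightarrow> nat) \<Rightarrow> bool" where
  "coxeter_graph S E m \<longleftrightarrow> finite S \<and>
     (\<forall>e\<in>E. e \<subseteq> S \<and> card e = 2 \<and> m e \<ge> 2)"

definition coxeter_relators :: "'x set \<Rightarrow> 'x set set \<Rightarrow> ('x set \<Rightarrow> nat) \<Rightarrow> 'x word set" where
  "coxeter_relators S E m =
     {[(x, 2)] | x. x \<in> S} \<union>
     {concat (replicate (m e) [(x, 1), (y, 1)]) | e x y. e \<in> E \<and> e = {x, y}}"

definition coxeter_group :: "'x set \<Rightarrow> 'x set set \<Rightarrow> ('x set \<Rightarrow> nat) \<Rightarrow> 'x word set monoid" where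
  "coxeter_group S E m = pres_group S (coxeter_relators S E m)"

text \<open>A LOT: finite vertex set V and a set of oriented labeled edges (x, w, y),
  meaning x --w--> y.  Vertices are taken to be natural numbers (any finite LOT
  is isomorphic to one of this form).\<close>
type_synonym lot_edge = "nat \<times> nat word \<times> nat"

definition lot_adj :: "lot_edge set \<Rightarrow> (nat \<times> nat) set" where
  "lot_adj Ed = {(x, y) | x w y. (x, w, y) \<in> Ed} \<union> {(y, x) | x w y. (x, w, y) \<in> Ed}"

definition is_tree :: "nat set \<Rightarrow> lot_edge set \<Rightarrow> bool" where
  "is_tree V Ed \<longleftrightarrow> finite V \<and> V \<noteq> {} \<and> finite Ed \<and>
     (\<forall>(x, w, y)\<in>Ed. x \<in> V \<and> y \<in> V \<and> x \<noteq> y) \<and>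
     (\<forall>(x, w, y)\<in>Ed. \<forall>(x', w', y')\<in>Ed. {x, y} = {x', y'} \<longrightarrow> (x, w, y) = (x', w', y')) \<and>
     (\<forall>u\<in>V. \<forall>v\<in>V. (u, v) \<in> (lot_adj Ed)\<^sup>*) \<and>
     card Ed + 1 = card V"

definition is_LOT :: "nat set \<Rightarrow> lot_edge set \<Rightarrow> bool" where
  "is_LOT V Ed \<longleftrightarrow> is_tree V Ed \<and> (\<forall>(x, w, y)\<in>Ed. w \<in> words V)"

definition lot_relator :: "lot_edge \<Rightarrow> nat word" where
  "lot_relator e = (case e of (x, w, y) \<Rightarrow> [(x, 1)] @ w @ inv_word (w @ [(y, 1)]))"

definition lot_group :: "nat set \<Rightarrow> lot_edge set \<Rightarrow> nat word set monoid" where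
  "lot_group V Ed = pres_group V (lot_relator ` Ed)"

definition lot_coxeter_type :: "lot_edge set \<Rightarrow> bool" where
  "lot_coxeter_type Ed \<longleftrightarrow>
     (\<forall>(x, w, y)\<in>Ed. \<forall>(z, k)\<in>set w. z \<noteq> x \<and> z \<noteq> y \<longrightarrow> even k)"

definition induced_edges :: "lot_edge set \<Rightarrow> nat set \<Rightarrow> lot_edge set" where
  "induced_edges Ed V' = {(x, w, y). (x, w, y) \<in> Ed \<and> x \<in> V' \<and> y \<in> V'}"

definition is_subLOT :: "nat set \<Rightarrow> lot_edge set \<Rightarrow> nat set \<Rightarrow> bool" where
  "is_subLOT V Ed V' \<longleftrightarrow> V' \<subseteq> V \<and> is_tree V' (induced_edges Ed V') \<and>
     (\<forall>(x, w, y)\<in>induced_edges Ed V'. w \<in> words V')"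

definition lot_prime :: "nat set \<Rightarrow> lot_edge set \<Rightarrow> bool" where
  "lot_prime V Ed \<longleftrightarrow> (\<forall>V'. is_subLOT V Ed V' \<longrightarrow> V' = V \<or> card V' = 1)"

definition abelianization :: "('a, 'b) monoid_scheme \<Rightarrow> 'a set monoid" where
  "abelianization G = G Mod (derived G (carrier G))"

definition maps_onto :: "('a, 'b) monoid_scheme \<Rightarrow> ('c, 'd) monoid_scheme \<Rightarrow> bool" where
  "maps_onto G H \<longleftrightarrow> (\<exists>h. h \<in> hom G H \<and> h ` carrier G = carrier H)"

end

theory Submission
  imports Defs
begin

(* If the odd-labelled edges of the Coxeter graph did not connect all generators, W would map
   onto Z/2 x Z/2 (send the generators of one odd component to (1, 0) and the others to (0, 1)),
   which is impossible when W^ab = Z/2.  So some walk s_0, ..., s_(n-1) along odd-labelled edges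
   visits every generator.  Take the path LOT on 0, ..., n-1 with edges
   i --w_i--> i+1,  w_i = (x_(i+1) x_i)^k_i x_0^2 ... x_(n-1)^2,  where m(s_i, s_(i+1)) = 2 k_i + 1.
   Sending x_i to s_i kills every relator x_i w_i = w_i x_(i+1), because in a dihedral group of
   order 2(2k+1) the two reflections are conjugate by (s_(i+1) s_i)^k and the squares are trivial;
   the map is onto since the walk visits every generator.  The squares only add even exponents,
   so the LOT is of Coxeter type, and they put every vertex into every label, so it is prime. *)

section \<open>Groups given by presentations\<close>

lemma words_Nil [simp]: "[] \<in> words S"
  by (simp add: words_def)

lemma words_Cons [simp]: "p # w \<in> words S \<longleftrightarrow> fst p \<in> S \<and> w \<in> words S"
  by (auto simp: words_def)

lemma words_append [simp]: "u @ v \<in> words S \<longleftrightarrow> u \<in> words S \<and> v \<in> words S"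
  by (auto simp: words_def)

lemma words_concat_replicate: "w \<in> words S \<Longrightarrow> concat (replicate n w) \<in> words S"
  by (induction n) auto

lemma inv_word_Nil [simp]: "inv_word [] = []"
  by (simp add: inv_word_def)

lemma inv_word_Cons [simp]: "inv_word ((z, k) # w) = inv_word w @ [(z, - k)]"
  by (simp add: inv_word_def)

lemma inv_word_append [simp]: "inv_word (u @ v) = inv_word v @ inv_word u"
  by (simp add: inv_word_def)

lemma inv_word_words [simp]: "inv_word w \<in> words S \<longleftrightarrow> w \<in> words S"
  by (induction w) auto

lemma pres_cong_words: "(u, v) \<in> pres_cong S R \<Longrightarrow> u \<in> words S \<and> v \<in> words S"
  by (induction rule: pres_cong.induct) auto

lemma equiv_pres_cong: "equiv (words S) (pres_cong S R)"
proof (rule equivI)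
  show "refl_on (words S) (pres_cong S R)"
    by (auto simp: refl_on_def intro: pres_cong.refl dest: pres_cong_words)
  show "pres_cong S R \<subseteq> words S \<times> words S"
    by (auto dest: pres_cong_words)
  show "sym (pres_cong S R)"
    by (auto simp: sym_def intro: pres_cong.sym)
  show "trans (pres_cong S R)"
    by (auto simp: trans_def intro: pres_cong.trans)
qed

lemma pres_cong_append:
  assumes "(u, u') \<in> pres_cong S R" "(v, v') \<in> pres_cong S R"
  shows "(u @ v, u' @ v') \<in> pres_cong S R"
proof -
  have "(u @ v, u' @ v) \<in> pres_cong S R"
    using pres_cong.ctxt[OF assms(1), of "[]" v] assms(2) pres_cong_words by auto
  moreover have "(u' @ v, u' @ v') \<in> pres_cong S R"
    using pres_cong.ctxt[OF assms(2), of u' "[]"] assms(1) pres_cong_words by auto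
  ultimately show ?thesis
    by (rule pres_cong.trans)
qed

lemma pres_cong_syllable_cancel:
  assumes "z \<in> S"
  shows "([(z, - k), (z, k)], []) \<in> pres_cong S R"
proof -
  have "([(z, - k), (z, k)], [(z, - k + k)]) \<in> pres_cong S R"
    using assms by (rule pres_cong.merge)
  then show ?thesis
    using pres_cong.zero[OF assms] by (auto intro: pres_cong.trans)
qed

lemma pres_cong_inv_word_left: "w \<in> words S \<Longrightarrow> (inv_word w @ w, []) \<in> pres_cong S R"
proof (induction w)
  case Nil
  then show ?case by (simp add: pres_cong.refl)
next
  case (Cons p w)
  obtain z k where p: "p = (z, k)" by fastforce
  with Cons.prems have z: "z \<in> S" and w: "w \<in> words S" by auto
  have "(inv_word w @ [(z, - k), (z, k)] @ w, inv_word w @ [] @ w) \<in> pres_cong S R"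
    using z w by (intro pres_cong.ctxt pres_cong_syllable_cancel) auto
  with Cons.IH[OF w] show ?case
    using p by (auto intro: pres_cong.trans)
qed

abbreviation pres_class :: "'x set \<Rightarrow> 'x word set \<Rightarrow> 'x word \<Rightarrow> 'x word set" where
  "pres_class S R w \<equiv> pres_cong S R `` {w}"

abbreviation pres_gen :: "'x set \<Rightarrow> 'x word set \<Rightarrow> 'x \<Rightarrow> 'x word set" where
  "pres_gen S R z \<equiv> pres_class S R [(z, 1)]"

lemma pres_class_eqI: "(u, v) \<in> pres_cong S R \<Longrightarrow> pres_class S R u = pres_class S R v"
  using equiv_class_eq[OF equiv_pres_cong] .

lemma carrier_pres_group: "carrier (pres_group S R) = words S // pres_cong S R"
  by (simp add: pres_group_def)

lemma pres_class_in_carrier: "w \<in> words S \<Longrightarrow> pres_class S R w \<in> carrier (pres_group S R)"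
  by (simp add: carrier_pres_group quotientI)

lemma pres_gen_in_carrier: "z \<in> S \<Longrightarrow> pres_gen S R z \<in> carrier (pres_group S R)"
  by (simp add: pres_class_in_carrier)

lemma carrier_pres_groupE:
  assumes "A \<in> carrier (pres_group S R)"
  obtains w where "w \<in> words S" "A = pres_class S R w"
  using assms by (auto simp: carrier_pres_group elim!: quotientE)

lemma one_pres_group: "\<one>\<^bsub>pres_group S R\<^esub> = pres_class S R []"
  by (simp add: pres_group_def)

lemma mult_pres_group:
  assumes "u \<in> words S" "v \<in> words S"
  shows "pres_class S R u \<otimes>\<^bsub>pres_group S R\<^esub> pres_class S R v = pres_class S R (u @ v)"
  using assms unfolding pres_group_def
  by (auto intro: pres_cong.refl pres_cong.trans pres_cong.sym pres_cong_append)

lemma group_pres_group: "group (pres_group S R)"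
proof (rule groupI)
  fix x y z
  assume "x \<in> carrier (pres_group S R)" "y \<in> carrier (pres_group S R)"
    "z \<in> carrier (pres_group S R)"
  then show "x \<otimes>\<^bsub>pres_group S R\<^esub> y \<otimes>\<^bsub>pres_group S R\<^esub> z =
      x \<otimes>\<^bsub>pres_group S R\<^esub> (y \<otimes>\<^bsub>pres_group S R\<^esub> z)"
    by (elim carrier_pres_groupE) (simp add: mult_pres_group)
next
  fix x
  assume "x \<in> carrier (pres_group S R)"
  then obtain w where w: "w \<in> words S" "x = pres_class S R w"
    by (rule carrier_pres_groupE)
  have "pres_class S R (inv_word w) \<otimes>\<^bsub>pres_group S R\<^esub> x = \<one>\<^bsub>pres_group S R\<^esub>"
    using w pres_class_eqI[OF pres_cong_inv_word_left] by (simp add: mult_pres_group one_pres_group)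
  moreover have "pres_class S R (inv_word w) \<in> carrier (pres_group S R)"
    using w by (simp add: pres_class_in_carrier)
  ultimately show "\<exists>y\<in>carrier (pres_group S R). y \<otimes>\<^bsub>pres_group S R\<^esub> x = \<one>\<^bsub>pres_group S R\<^esub>"
    by blast
qed (auto elim!: carrier_pres_groupE simp: mult_pres_group one_pres_group pres_class_in_carrier)

fun eval_word :: "('g, 'b) monoid_scheme \<Rightarrow> ('x \<Rightarrow> 'g) \<Rightarrow> 'x word \<Rightarrow> 'g" where
  "eval_word H g [] = \<one>\<^bsub>H\<^esub>"
| "eval_word H g ((z, k) # w) = g z [^]\<^bsub>H\<^esub> k \<otimes>\<^bsub>H\<^esub> eval_word H g w"

context group
begin

lemma eval_word_closed:
  "g ` S \<subseteq> carrier G \<Longrightarrow> w \<in> words S \<Longrightarrow> eval_word G g w \<in> carrier G"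
  by (induction w) auto

lemma eval_word_append:
  assumes "g ` S \<subseteq> carrier G" "u \<in> words S" "v \<in> words S"
  shows "eval_word G g (u @ v) = eval_word G g u \<otimes> eval_word G g v"
  using assms(2) by (induction u) (use assms eval_word_closed[OF assms(1)] in \<open>auto simp: m_assoc\<close>)

lemma eval_word_inv_word:
  assumes "g ` S \<subseteq> carrier G" "w \<in> words S"
  shows "eval_word G g (inv_word w) = inv (eval_word G g w)"
  using assms(2)
proof (induction w)
  case (Cons p w)
  obtain z k where p: "p = (z, k)" by fastforce
  with Cons.prems assms(1) have z: "z \<in> S" "g z \<in> carrier G" and w: "w \<in> words S" by auto
  have "eval_word G g (inv_word (p # w)) = inv (eval_word G g w) \<otimes> inv (g z [^] k)"
    using Cons.IH[OF w] assms(1) p z w by (simp add: eval_word_append int_pow_neg)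
  also have "\<dots> = inv (eval_word G g (p # w))"
    using eval_word_closed[OF assms(1)] p z w by (simp add: inv_mult_group)
  finally show ?case .
qed simp

lemma eval_word_concat_replicate:
  assumes "g ` S \<subseteq> carrier G" "w \<in> words S"
  shows "eval_word G g (concat (replicate n w)) = eval_word G g w [^] n"
proof (induction n)
  case (Suc n)
  have "eval_word G g (concat (replicate (Suc n) w)) = eval_word G g w \<otimes> eval_word G g w [^] n"
    using assms words_concat_replicate[OF assms(2)] by (simp add: eval_word_append Suc.IH)
  then show ?case
    using nat_pow_Suc2[OF eval_word_closed[OF assms]] by simp
qed simp

lemma eval_word_map_apfst: "eval_word G g (map (apfst f) w) = eval_word G (g \<circ> f) w"
  by (induction w) auto

lemma eval_word_cong:
  "(\<And>z. z \<in> S \<Longrightarrow> g z = g' z) \<Longrightarrow> w \<in> words S \<Longrightarrow> eval_word G g w = eval_word G g' w"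
  by (induction w) auto

lemma eval_word_one: "eval_word G (\<lambda>_. \<one>) w = \<one>"
  by (induction w) auto

lemma eval_word_pres_cong:
  assumes g: "g ` S \<subseteq> carrier G"
    and relators: "\<And>r. r \<in> R \<Longrightarrow> r \<in> words S \<Longrightarrow> eval_word G g r = \<one>"
  shows "(u, v) \<in> pres_cong S R \<Longrightarrow> eval_word G g u = eval_word G g v"
proof (induction rule: pres_cong.induct)
  case (ctxt u v a b)
  then have "u \<in> words S" "v \<in> words S"
    using pres_cong_words by blast+
  with ctxt show ?case
    using g by (simp add: eval_word_append)
next
  case (merge z k l)
  with g have "g z \<in> carrier G" by auto
  then show ?case
    by (simp add: int_pow_mult m_assoc)
qed (use g relators in auto)

end

lemma pres_group_universal:
  assumes H: "group H" and g: "g ` S \<subseteq> carrier H"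
    and relators: "\<And>r. r \<in> R \<Longrightarrow> r \<in> words S \<Longrightarrow> eval_word H g r = \<one>\<^bsub>H\<^esub>"
  obtains h where "h \<in> hom (pres_group S R) H"
    and "\<And>w. w \<in> words S \<Longrightarrow> h (pres_class S R w) = eval_word H g w"
proof
  interpret H: group H by (rule H)
  define h where "h A = eval_word H g (SOME w. w \<in> A)" for A
  show h_class: "h (pres_class S R w) = eval_word H g w" if w: "w \<in> words S" for w
  proof -
    have "w \<in> pres_class S R w"
      using w by (simp add: pres_cong.refl)
    then have "(w, SOME w'. w' \<in> pres_class S R w) \<in> pres_cong S R"
      by (metis Image_singleton_iff someI)
    then show ?thesis
      unfolding h_def using H.eval_word_pres_cong[OF g relators] by metis
  qed
  show "h \<in> hom (pres_group S R) H"
    by (rule homI) (auto elim!: carrier_pres_groupE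
        simp: mult_pres_group h_class H.eval_word_append[OF g] H.eval_word_closed[OF g])
qed

lemma pres_class_syllable_mult:
  "z \<in> S \<Longrightarrow> pres_class S R [(z, k)] \<otimes>\<^bsub>pres_group S R\<^esub> pres_class S R [(z, l)]
    = pres_class S R [(z, k + l)]"
  by (simp add: mult_pres_group pres_class_eqI pres_cong.merge)

lemma pres_class_syllable_zero: "z \<in> S \<Longrightarrow> pres_class S R [(z, 0)] = \<one>\<^bsub>pres_group S R\<^esub>"
  by (simp add: one_pres_group pres_class_eqI pres_cong.zero)

lemma pres_gen_int_pow:
  assumes z: "z \<in> S"
  shows "pres_gen S R z [^]\<^bsub>pres_group S R\<^esub> (k::int) = pres_class S R [(z, k)]"
proof -
  interpret group "pres_group S R" by (rule group_pres_group)
  have nat_pow: "pres_gen S R z [^]\<^bsub>pres_group S R\<^esub> n = pres_class S R [(z, int n)]" for n :: nat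
    by (induction n) (simp_all add: z pres_class_syllable_zero pres_class_syllable_mult add.commute)
  show ?thesis
  proof (cases "k \<ge> 0")
    case True
    then show ?thesis
      using nat_pow[of "nat k"] by (simp add: int_pow_int[symmetric])
  next
    case False
    have "pres_class S R [(z, k)] \<otimes>\<^bsub>pres_group S R\<^esub> pres_class S R [(z, - k)] = \<one>\<^bsub>pres_group S R\<^esub>"
      using z by (simp add: pres_class_syllable_mult pres_class_syllable_zero)
    then have "inv\<^bsub>pres_group S R\<^esub> (pres_class S R [(z, - k)]) = pres_class S R [(z, k)]"
      using z by (simp add: inv_equality pres_class_in_carrier)
    then show ?thesis
      using False nat_pow[of "nat (- k)"] int_pow_neg_int[OF pres_gen_in_carrier[OF z], of "nat (- k)"]
      by simp
  qed
qed

lemma eval_word_pres_gen: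
  "w \<in> words S \<Longrightarrow> eval_word (pres_group S R) (pres_gen S R) w = pres_class S R w"
proof (induction w)
  case (Cons p w)
  obtain z k where "p = (z, k)" by fastforce
  with Cons show ?case
    by (simp add: pres_gen_int_pow mult_pres_group)
qed (simp add: one_pres_group)

lemma pres_class_relator: "r \<in> R \<Longrightarrow> r \<in> words S \<Longrightarrow> pres_class S R r = \<one>\<^bsub>pres_group S R\<^esub>"
  by (simp add: one_pres_group pres_class_eqI pres_cong.rel)

lemma pres_group_maps_onto:
  assumes g: "g ` V \<subseteq> carrier (pres_group S R)"
    and gens: "pres_gen S R ` S \<subseteq> g ` V"
    and relators: "\<And>r. r \<in> R' \<Longrightarrow> r \<in> words V \<Longrightarrow> eval_word (pres_group S R) g r = \<one>\<^bsub>pres_group S R\<^esub>"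
  shows "maps_onto (pres_group V R') (pres_group S R)"
proof -
  interpret W: group "pres_group S R" by (rule group_pres_group)
  obtain h where h: "h \<in> hom (pres_group V R') (pres_group S R)"
    and h_class: "\<And>v. v \<in> words V \<Longrightarrow> h (pres_class V R' v) = eval_word (pres_group S R) g v"
    using pres_group_universal[OF W.is_group g relators] by blast
  define f where "f z = inv_into V g (pres_gen S R z)" for z
  have f: "f z \<in> V" "g (f z) = pres_gen S R z" if "z \<in> S" for z
  proof -
    have "pres_gen S R z \<in> g ` V"
      using gens that by blast
    then show "f z \<in> V" "g (f z) = pres_gen S R z"
      unfolding f_def by (rule inv_into_into, rule f_inv_into_f)
  qed
  have "A \<in> h ` carrier (pres_group V R')" if "A \<in> carrier (pres_group S R)" for A
  proof -
    obtain w where w: "w \<in> words S" "A = pres_class S R w"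
      using \<open>A \<in> carrier (pres_group S R)\<close> by (rule carrier_pres_groupE)
    then have v: "map (apfst f) w \<in> words V"
      using f by (auto simp: words_def)
    have "h (pres_class V R' (map (apfst f) w)) = eval_word (pres_group S R) (g \<circ> f) w"
      by (simp add: h_class[OF v] W.eval_word_map_apfst)
    also have "\<dots> = A"
      using w f by (simp add: W.eval_word_cong[of S "g \<circ> f" "pres_gen S R"] eval_word_pres_gen)
    finally show ?thesis
      using v by (metis image_eqI pres_class_in_carrier)
  qed
  then have "h ` carrier (pres_group V R') = carrier (pres_group S R)"
    using h by (auto simp: hom_def)
  then show ?thesis
    unfolding maps_onto_def using h by blast
qed

lemma maps_onto_pres_group_empty: "maps_onto (pres_group V R) (pres_group {} R')"
proof (rule pres_group_maps_onto)
  interpret W: group "pres_group {} R'" by (rule group_pres_group)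
  show "(\<lambda>_. \<one>\<^bsub>pres_group {} R'\<^esub>) ` V \<subseteq> carrier (pres_group {} R')"
    by auto
  show "eval_word (pres_group {} R') (\<lambda>_. \<one>\<^bsub>pres_group {} R'\<^esub>) r = \<one>\<^bsub>pres_group {} R'\<^esub>" for r
    by (rule W.eval_word_one)
qed simp

abbreviation coxeter_gen :: "'x set \<Rightarrow> 'x set set \<Rightarrow> ('x set \<Rightarrow> nat) \<Rightarrow> 'x \<Rightarrow> 'x word set" where
  "coxeter_gen S E m \<equiv> pres_gen S (coxeter_relators S E m)"

lemma group_coxeter_group: "group (coxeter_group S E m)"
  unfolding coxeter_group_def by (rule group_pres_group)

lemma coxeter_gen_in_carrier: "s \<in> S \<Longrightarrow> coxeter_gen S E m s \<in> carrier (coxeter_group S E m)"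
  unfolding coxeter_group_def by (rule pres_gen_in_carrier)

context group
begin

lemma int_pow_two: "x \<in> carrier G \<Longrightarrow> x [^] (2::int) = x \<otimes> x"
  using int_pow_int[of G x 2] by (simp add: numeral_2_eq_2)

lemma eval_word_alternating:
  assumes "g x \<in> carrier G" "g y \<in> carrier G"
  shows "eval_word G g (concat (replicate n [(x, 1), (y, 1)])) = (g x \<otimes> g y) [^] n"
  using eval_word_concat_replicate[of g "{x, y}" "[(x, 1), (y, 1)]"] assms by simp

end

lemma coxeter_relatorE:
  assumes "r \<in> coxeter_relators S E m"
  obtains (square) s where "s \<in> S" "r = [(s, 2)]"
    | (braid) e s t where "e \<in> E" "e = {s, t}" "r = concat (replicate (m e) [(s, 1), (t, 1)])"
  using assms unfolding coxeter_relators_def by blast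

lemma coxeter_graph_edge_in_vertices:
  "coxeter_graph S E m \<Longrightarrow> e \<in> E \<Longrightarrow> e = {s, t} \<Longrightarrow> s \<in> S \<and> t \<in> S"
  by (auto simp: coxeter_graph_def)

lemma coxeter_group_hom:
  assumes H: "group H" and cg: "coxeter_graph S E m" and g: "g ` S \<subseteq> carrier H"
    and g_involution: "\<And>s. s \<in> S \<Longrightarrow> g s \<otimes>\<^bsub>H\<^esub> g s = \<one>\<^bsub>H\<^esub>"
    and g_braid: "\<And>e s t. e \<in> E \<Longrightarrow> e = {s, t} \<Longrightarrow> (g s \<otimes>\<^bsub>H\<^esub> g t) [^]\<^bsub>H\<^esub> m e = \<one>\<^bsub>H\<^esub>"
  obtains h where "h \<in> hom (coxeter_group S E m) H"
    and "\<And>s. s \<in> S \<Longrightarrow> h (coxeter_gen S E m s) = g s"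
proof -
  interpret H: group H by (rule H)
  have "eval_word H g r = \<one>\<^bsub>H\<^esub>" if "r \<in> coxeter_relators S E m" for r
    using that
  proof (cases rule: coxeter_relatorE)
    case (square s)
    with g have "g s \<in> carrier H"
      by auto
    with square show ?thesis
      by (simp add: H.int_pow_two g_involution)
  next
    case (braid e s t)
    with g coxeter_graph_edge_in_vertices[OF cg] have "g s \<in> carrier H" "g t \<in> carrier H"
      by auto
    with braid show ?thesis
      by (simp add: H.eval_word_alternating g_braid)
  qed
  then obtain h where "h \<in> hom (coxeter_group S E m) H"
    "\<And>w. w \<in> words S \<Longrightarrow> h (pres_class S (coxeter_relators S E m) w) = eval_word H g w"
    unfolding coxeter_group_def using pres_group_universal[OF H g] by blast
  with g that show ?thesis
    by (auto simp: image_subset_iff)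
qed

lemma coxeter_gen_involution:
  assumes "s \<in> S"
  shows "coxeter_gen S E m s \<otimes>\<^bsub>coxeter_group S E m\<^esub> coxeter_gen S E m s
    = \<one>\<^bsub>coxeter_group S E m\<^esub>"
proof -
  interpret W: group "coxeter_group S E m"
    by (rule group_coxeter_group)
  have "[(s, 2)] \<in> coxeter_relators S E m"
    using assms by (auto simp: coxeter_relators_def)
  then show ?thesis
    using assms W.int_pow_two[of "coxeter_gen S E m s"]
    by (simp add: coxeter_group_def pres_gen_int_pow pres_class_relator pres_gen_in_carrier)
qed

lemma coxeter_gen_braid:
  assumes cg: "coxeter_graph S E m" and e: "e \<in> E" "e = {s, t}"
  shows "(coxeter_gen S E m s \<otimes>\<^bsub>coxeter_group S E m\<^esub> coxeter_gen S E m t)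
      [^]\<^bsub>coxeter_group S E m\<^esub> m e = \<one>\<^bsub>coxeter_group S E m\<^esub>"
proof -
  interpret W: group "coxeter_group S E m"
    by (rule group_coxeter_group)
  have st: "s \<in> S" "t \<in> S"
    using coxeter_graph_edge_in_vertices[OF cg e] by auto
  define r where "r = concat (replicate (m e) [(s, 1::int), (t, 1)])"
  have "r \<in> coxeter_relators S E m" "r \<in> words S"
    using e st by (auto simp: coxeter_relators_def r_def intro: words_concat_replicate)
  then show ?thesis
    using st W.eval_word_alternating[of "coxeter_gen S E m" s t "m e"]
    by (simp add: coxeter_group_def eval_word_pres_gen pres_class_relator pres_gen_in_carrier r_def)
qed

context group
begin

lemma nat_pow_mult_shift:
  assumes "a \<in> carrier G" "b \<in> carrier G"
  shows "(a \<otimes> b) [^] (k::nat) \<otimes> a = a \<otimes> (b \<otimes> a) [^] k"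
proof (induction k)
  case (Suc k)
  have "(a \<otimes> b) [^] Suc k \<otimes> a = ((a \<otimes> b) [^] k \<otimes> a) \<otimes> (b \<otimes> a)"
    using assms by (simp add: m_assoc)
  also have "\<dots> = a \<otimes> (b \<otimes> a) [^] Suc k"
    using assms by (simp add: Suc m_assoc)
  finally show ?case .
qed (use assms in simp)

text \<open>In the dihedral group of order 2(2k+1), (ab)^(k+1) = (ba)^k, so both sides equal b(ab)^k.\<close>
lemma involutions_odd_order_conj:
  assumes a: "a \<in> carrier G" and b: "b \<in> carrier G"
    and "a \<otimes> a = \<one>" "b \<otimes> b = \<one>" and order: "(a \<otimes> b) [^] Suc (2 * k) = \<one>"
  shows "a \<otimes> (b \<otimes> a) [^] k = (b \<otimes> a) [^] k \<otimes> b"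
proof -
  have "inv a = a" "inv b = b"
    using assms by (simp_all add: inv_equality)
  then have inv_ab: "inv (a \<otimes> b) = b \<otimes> a"
    using a b by (simp add: inv_mult_group)
  have "(a \<otimes> b) [^] Suc k \<otimes> (a \<otimes> b) [^] k = (a \<otimes> b) [^] (Suc k + k)"
    using a b by (simp only: nat_pow_mult m_closed)
  also have "\<dots> = \<one>"
    using order by (simp only: add_Suc mult_2)
  finally have "(a \<otimes> b) [^] Suc k \<otimes> (a \<otimes> b) [^] k = \<one>" .
  then have "(a \<otimes> b) [^] Suc k = inv ((a \<otimes> b) [^] k)"
    using a b by (simp add: inv_equality)
  also have "\<dots> = (b \<otimes> a) [^] k"
    using a b inv_ab by (simp add: nat_pow_inv[symmetric])
  finally have power: "(b \<otimes> a) [^] k = (a \<otimes> b) [^] Suc k" ..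
  have "a \<otimes> (b \<otimes> a) [^] k = (a \<otimes> a) \<otimes> b \<otimes> (a \<otimes> b) [^] k"
    unfolding power nat_pow_Suc2[OF m_closed[OF a b]] using a b by (simp add: m_assoc)
  also have "\<dots> = (b \<otimes> a) [^] k \<otimes> b"
    using assms nat_pow_mult_shift[OF b a] by simp
  finally show ?thesis .
qed

end

section \<open>Connectivity of the odd-labelled subgraph\<close>

lemma card_carrier_iso_integer_mod_group:
  "G \<cong> integer_mod_group n \<Longrightarrow> card (carrier G) = n"
  by (auto simp: is_iso_def iso_def carrier_integer_mod_group dest: bij_betw_same_card)

lemma (in group_hom) card_image_le_card_abelianization:
  assumes "comm_group H" and "finite (carrier (abelianization G))"
  shows "card (h ` carrier G) \<le> card (carrier (abelianization G))"
proof -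
  let ?D = "derived G (carrier G)"
  have "h ` ?D = derived H (h ` carrier G)"
    by (simp add: derived_img)
  also have "\<dots> = {\<one>\<^bsub>H\<^esub>}"
    by (rule comm_group.derived_eq_singleton[OF assms(1)]) auto
  finally have "?D \<subseteq> kernel G H h"
    using G.derived_in_carrier[of "carrier G"] by (auto simp: kernel_def)
  then obtain f where f: "f \<in> hom (G Mod ?D) H" "\<And>x. x \<in> carrier G \<Longrightarrow> f (?D #> x) = h x"
    using FactGroup_universal_kernel[OF G.derived_is_normal[OF G.normal_self]] by blast
  have "h ` carrier G = f ` carrier (G Mod ?D)"
    by (simp add: carrier_FactGroup image_image f(2) cong: image_cong)
  then show ?thesis
    using assms(2) card_image_le by (simp add: abelianization_def)
qed

definition klein_four :: "(bool \<times> bool) monoid" where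
  "klein_four = \<lparr>carrier = UNIV, monoid.mult = \<lambda>(a, b) (c, d). (a \<noteq> c, b \<noteq> d), one = (False, False)\<rparr>"

lemma klein_four_simps [simp]:
  "carrier klein_four = UNIV"
  "x \<otimes>\<^bsub>klein_four\<^esub> y = (fst x \<noteq> fst y, snd x \<noteq> snd y)"
  "\<one>\<^bsub>klein_four\<^esub> = (False, False)"
  by (simp_all add: klein_four_def split: prod.split)

lemma comm_group_klein_four: "comm_group klein_four"
  by (rule groupI [THEN group.group_comm_groupI]) auto

lemma klein_four_nat_pow: "x [^]\<^bsub>klein_four\<^esub> (n::nat) = (if even n then (False, False) else x)"
  by (induction n) auto

definition odd_adj :: "'x set set \<Rightarrow> ('x set \<Rightarrow> nat) \<Rightarrow> ('x \<times> 'x) set" where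
  "odd_adj E m = {(s, t). {s, t} \<in> E \<and> odd (m {s, t})}"

lemma odd_adj_sym: "(s, t) \<in> odd_adj E m \<Longrightarrow> (t, s) \<in> odd_adj E m"
  by (simp add: odd_adj_def insert_commute)

lemma coxeter_group_onto_klein_four:
  assumes cg: "coxeter_graph S E m" and x: "x \<in> S" and y: "y \<in> S"
    and not_connected: "(x, y) \<notin> (odd_adj E m)\<^sup>*"
  shows "\<exists>f. group_hom (coxeter_group S E m) klein_four f \<and> f ` carrier (coxeter_group S E m) = UNIV"
proof -
  define C where "C = (odd_adj E m)\<^sup>* `` {x}"
  define g where "g z = (z \<in> C, z \<notin> C)" for z
  have odd_edge: "g s = g t" if "(s, t) \<in> odd_adj E m" for s t
    using that odd_adj_sym[OF that] by (auto simp: g_def C_def)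
  obtain f where f: "f \<in> hom (coxeter_group S E m) klein_four"
    and f_gen: "\<And>s. s \<in> S \<Longrightarrow> f (coxeter_gen S E m s) = g s"
  proof (rule coxeter_group_hom[OF comm_group_klein_four[THEN comm_group.axioms(2)] cg])
    show "(g s \<otimes>\<^bsub>klein_four\<^esub> g t) [^]\<^bsub>klein_four\<^esub> m e = \<one>\<^bsub>klein_four\<^esub>"
      if "e \<in> E" "e = {s, t}" for e s t
      using that odd_edge[of s t] by (auto simp: odd_adj_def klein_four_nat_pow)
  qed auto
  interpret f: group_hom "coxeter_group S E m" klein_four f
    using f group_coxeter_group comm_group_klein_four
    by (simp add: group_hom_def group_hom_axioms_def comm_group.axioms(2))
  let ?x = "coxeter_gen S E m x" and ?y = "coxeter_gen S E m y"
  have gens: "?x \<in> carrier (coxeter_group S E m)" "?y \<in> carrier (coxeter_group S E m)"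
    using x y by (simp_all add: coxeter_gen_in_carrier)
  have "x \<in> C" "y \<notin> C"
    using not_connected by (auto simp: C_def)
  then have "(False, False) = f \<one>\<^bsub>coxeter_group S E m\<^esub>" "(True, False) = f ?x"
    "(False, True) = f ?y" "(True, True) = f (?x \<otimes>\<^bsub>coxeter_group S E m\<^esub> ?y)"
    using x y gens by (simp_all add: f_gen g_def)
  then have "{(False, False), (True, False), (False, True), (True, True)}
      \<subseteq> f ` carrier (coxeter_group S E m)"
    using gens by blast
  moreover have "UNIV = {(False, False), (True, False), (False, True), (True, True)}"
    by auto
  ultimately have "f ` carrier (coxeter_group S E m) = UNIV"
    by blast
  with f.group_hom_axioms show ?thesis
    by blast
qed

lemma odd_adj_connected:
  assumes cg: "coxeter_graph S E m"
    and ab: "abelianization (coxeter_group S E m) \<cong> integer_mod_group 2"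
    and x: "x \<in> S" and y: "y \<in> S"
  shows "(x, y) \<in> (odd_adj E m)\<^sup>*"
proof (rule ccontr)
  assume "(x, y) \<notin> (odd_adj E m)\<^sup>*"
  then obtain f where f: "group_hom (coxeter_group S E m) klein_four f"
    and onto: "f ` carrier (coxeter_group S E m) = UNIV"
    using coxeter_group_onto_klein_four[OF cg x y] by blast
  have card_ab: "card (carrier (abelianization (coxeter_group S E m))) = 2"
    by (rule card_carrier_iso_integer_mod_group[OF ab])
  then have "card (f ` carrier (coxeter_group S E m)) \<le> 2"
    using group_hom.card_image_le_card_abelianization[OF f comm_group_klein_four]
      card_ge_0_finite by fastforce
  then have "card (UNIV :: (bool \<times> bool) set) \<le> 2"
    by (simp only: onto)
  then show False
    by (simp add: card_cartesian_product flip: UNIV_Times_UNIV)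
qed

lemma rtrancl_imp_walk:
  assumes "(x, y) \<in> Q\<^sup>*"
  shows "\<exists>p. p \<noteq> [] \<and> hd p = x \<and> last p = y \<and> successively (\<lambda>a b. (a, b) \<in> Q) p
    \<and> set p \<subseteq> insert y (Domain Q)"
  using assms
proof (induction rule: converse_rtrancl_induct)
  case base
  show ?case
    by (intro exI[of _ "[y]"]) simp
next
  case (step x z)
  then obtain p where "p \<noteq> []" "hd p = z" "last p = y" "successively (\<lambda>a b. (a, b) \<in> Q) p"
    "set p \<subseteq> insert y (Domain Q)"
    by blast
  with step.hyps(1) show ?case
    by (intro exI[of _ "x # p"]) (auto simp: successively_Cons)
qed

lemma successively_append_tl:
  assumes "successively P p" "successively P q" "p \<noteq> []" "q \<noteq> []" "hd q = last p"
  shows "successively P (p @ tl q)"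
  using assms by (cases q) (auto simp: successively_append_iff successively_Cons)

lemma connected_imp_covering_walk:
  assumes "finite S" "S \<noteq> {}" "Q \<subseteq> S \<times> S"
    and connected: "\<And>x y. x \<in> S \<Longrightarrow> y \<in> S \<Longrightarrow> (x, y) \<in> Q\<^sup>*"
  obtains ws where "successively (\<lambda>a b. (a, b) \<in> Q) ws" "set ws = S"
proof -
  obtain x0 where x0: "x0 \<in> S"
    using assms(2) by blast
  have "\<exists>p. p \<noteq> [] \<and> successively (\<lambda>a b. (a, b) \<in> Q) p \<and> T \<subseteq> set p \<and> set p \<subseteq> S"
    if "finite T" "T \<subseteq> S" for T
    using that
  proof (induction T rule: finite_induct)
    case empty
    show ?case
      using x0 by (intro exI[of _ "[x0]"]) simp
  next
    case (insert t T)
    obtain p where p: "p \<noteq> []" "successively (\<lambda>a b. (a, b) \<in> Q) p" "T \<subseteq> set p"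
      "set p \<subseteq> S"
      using insert.IH insert.prems by auto
    have "(last p, t) \<in> Q\<^sup>*"
      using p insert.prems by (intro connected) auto
    then obtain q where q: "q \<noteq> []" "hd q = last p" "last q = t"
      "successively (\<lambda>a b. (a, b) \<in> Q) q" "set q \<subseteq> insert t (Domain Q)"
      using rtrancl_imp_walk[of "last p" t Q] by auto
    have "set (p @ tl q) = set p \<union> set q"
      using p(1) q(1,2) by (cases q) auto
    moreover have "t \<in> set q"
      using q(1,3) last_in_set by blast
    moreover have "set q \<subseteq> S"
      using q(5) insert.prems assms(3) by blast
    ultimately have "insert t T \<subseteq> set (p @ tl q)" "set (p @ tl q) \<subseteq> S"
      using p by auto
    moreover have "successively (\<lambda>a b. (a, b) \<in> Q) (p @ tl q)"
      by (rule successively_append_tl[OF p(2) q(4) p(1) q(1,2)])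
    ultimately show ?case
      using p(1) by blast
  qed
  from this[OF assms(1) subset_refl] show thesis
    using that by (metis subset_antisym)
qed

section \<open>The path LOT\<close>

definition path_label :: "nat \<Rightarrow> nat \<Rightarrow> nat \<Rightarrow> nat word" where
  "path_label n k i = concat (replicate k [(Suc i, 1), (i, 1)]) @ map (\<lambda>j. (j, 2)) [0..<n]"

definition path_edges :: "nat \<Rightarrow> (nat \<Rightarrow> nat) \<Rightarrow> lot_edge set" where
  "path_edges n K = (\<lambda>i. (i, path_label n (K i) i, Suc i)) ` {0..<n - 1}"

lemma set_path_label: "set (path_label n k i) \<subseteq> {(Suc i, 1), (i, 1)} \<union> (\<lambda>j. (j, 2)) ` {0..<n}"
  unfolding path_label_def by (auto simp: set_replicate_conv_if split: if_splits)

lemma square_in_path_label: "j < n \<Longrightarrow> (j, 2) \<in> set (path_label n k i)"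
  unfolding path_label_def by auto

lemma path_label_words: "Suc i < n \<Longrightarrow> path_label n k i \<in> words {0..<n}"
  using set_path_label[of n k i] unfolding words_def by force

lemma path_edges_coxeter_type: "lot_coxeter_type (path_edges n K)"
  using set_path_label by (fastforce simp: lot_coxeter_type_def path_edges_def)

lemma path_edges_adj:
  assumes "Suc i < n"
  shows "(i, Suc i) \<in> lot_adj (path_edges n K)" "(Suc i, i) \<in> lot_adj (path_edges n K)"
proof -
  have "(i, path_label n (K i) i, Suc i) \<in> path_edges n K"
    using assms unfolding path_edges_def by force
  then show "(i, Suc i) \<in> lot_adj (path_edges n K)" "(Suc i, i) \<in> lot_adj (path_edges n K)"
    unfolding lot_adj_def by blast+
qed

lemma path_is_tree:
  assumes "n \<ge> 1"
  shows "is_tree {0..<n} (path_edges n K)"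
proof -
  have reach: "(0, u) \<in> (lot_adj (path_edges n K))\<^sup>* \<and> (u, 0) \<in> (lot_adj (path_edges n K))\<^sup>*"
    if "u < n" for u
    using that
  proof (induction u)
    case (Suc u)
    then show ?case
      using path_edges_adj[OF Suc.prems, of K]
      by (meson Suc_lessD rtrancl_into_rtrancl converse_rtrancl_into_rtrancl)
  qed simp
  have "inj_on (\<lambda>i. (i, path_label n (K i) i, Suc i)) {0..<n - 1}"
    by (rule inj_onI) simp
  then have "card (path_edges n K) = n - 1"
    unfolding path_edges_def by (simp add: card_image)
  moreover have "\<forall>u\<in>{0..<n}. \<forall>v\<in>{0..<n}. (u, v) \<in> (lot_adj (path_edges n K))\<^sup>*"
    using reach by (meson atLeastLessThan_iff rtrancl_trans)
  ultimately show ?thesis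
    using assms unfolding is_tree_def by (auto simp: path_edges_def doubleton_eq_iff)
qed

lemma path_is_LOT: "n \<ge> 1 \<Longrightarrow> is_LOT {0..<n} (path_edges n K)"
  unfolding is_LOT_def using path_is_tree by (auto simp: path_edges_def intro!: path_label_words)

lemma path_lot_prime:
  assumes "n \<ge> 1"
  shows "lot_prime {0..<n} (path_edges n K)"
  unfolding lot_prime_def
proof (intro allI impI)
  fix V'
  assume sub: "is_subLOT {0..<n} (path_edges n K) V'"
  show "V' = {0..<n} \<or> card V' = 1"
  proof (cases "induced_edges (path_edges n K) V' = {}")
    case True
    then show ?thesis
      using sub by (simp add: is_subLOT_def is_tree_def)
  next
    case False
    then obtain i where i: "(i, path_label n (K i) i, Suc i) \<in> induced_edges (path_edges n K) V'"
      unfolding induced_edges_def path_edges_def by auto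
    then have "path_label n (K i) i \<in> words V'"
      using sub by (auto simp: is_subLOT_def)
    then have "{0..<n} \<subseteq> V'"
      using square_in_path_label[of _ n "K i" i] unfolding words_def by force
    then show ?thesis
      using sub by (auto simp: is_subLOT_def)
  qed
qed

context group
begin

lemma eval_word_squares:
  assumes "g ` V \<subseteq> carrier G" "\<And>j. j \<in> V \<Longrightarrow> g j \<otimes> g j = \<one>" "set js \<subseteq> V"
  shows "eval_word G g (map (\<lambda>j. (j, 2)) js) = \<one>"
  using assms(3) by (induction js) (use assms(1,2) in \<open>auto simp: int_pow_two\<close>)

lemma eval_path_label:
  assumes "g ` {0..<n} \<subseteq> carrier G" "\<And>j. j < n \<Longrightarrow> g j \<otimes> g j = \<one>" "Suc i < n"
  shows "eval_word G g (path_label n k i) = (g (Suc i) \<otimes> g i) [^] k"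
proof -
  have "[(Suc i, 1), (i, 1)] \<in> words {0..<n}" "map (\<lambda>j. (j, 2)) [0..<n] \<in> words {0..<n}"
    using assms(3) by (auto simp: words_def)
  moreover have "g i \<in> carrier G" "g (Suc i) \<in> carrier G"
    using assms(1,3) by auto
  ultimately show ?thesis
    using assms eval_word_squares[of g "{0..<n}" "[0..<n]"]
    by (simp add: path_label_def eval_word_append eval_word_concat_replicate words_concat_replicate)
qed

lemma eval_lot_relator_eq_one_iff:
  assumes "g ` V \<subseteq> carrier G" "x \<in> V" "y \<in> V" "w \<in> words V"
  shows "eval_word G g (lot_relator (x, w, y)) = \<one>
    \<longleftrightarrow> g x \<otimes> eval_word G g w = eval_word G g w \<otimes> g y"
proof -
  have carrier: "g x \<in> carrier G" "g y \<in> carrier G" "eval_word G g w \<in> carrier G"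
    using assms by (auto intro: eval_word_closed)
  have "eval_word G g (lot_relator (x, w, y))
      = g x \<otimes> (eval_word G g w \<otimes> eval_word G g (inv_word (w @ [(y, 1)])))"
    using assms carrier by (simp add: lot_relator_def eval_word_append)
  also have "\<dots> = (g x \<otimes> eval_word G g w) \<otimes> inv (eval_word G g w \<otimes> g y)"
    using assms carrier
    by (simp add: eval_word_inv_word eval_word_append m_assoc int_pow_neg inv_mult_group)
  finally have "eval_word G g (lot_relator (x, w, y))
      = (g x \<otimes> eval_word G g w) \<otimes> inv (eval_word G g w \<otimes> g y)" .
  then show ?thesis
    using carrier by (simp add: inv_solve_right')
qed

lemma eval_path_relator:
  assumes "g ` {0..<n} \<subseteq> carrier G" "\<And>j. j < n \<Longrightarrow> g j \<otimes> g j = \<one>" "Suc i < n"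
    and "(g i \<otimes> g (Suc i)) [^] Suc (2 * k) = \<one>"
  shows "eval_word G g (lot_relator (i, path_label n k i, Suc i)) = \<one>"
proof -
  have "g i \<in> carrier G" "g (Suc i) \<in> carrier G"
    using assms(1,3) by auto
  then have "g i \<otimes> (g (Suc i) \<otimes> g i) [^] k = (g (Suc i) \<otimes> g i) [^] k \<otimes> g (Suc i)"
    using assms(2-4) by (intro involutions_odd_order_conj) auto
  moreover have "eval_word G g (path_label n k i) = (g (Suc i) \<otimes> g i) [^] k"
    by (rule eval_path_label[OF assms(1-3)])
  ultimately show ?thesis
    using assms(3)
    by (subst eval_lot_relator_eq_one_iff[OF assms(1) _ _ path_label_words[OF assms(3)]]) simp_all
qed

end

lemma path_lot_maps_onto_coxeter_group:
  assumes cg: "coxeter_graph S E m"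
    and walk: "successively (\<lambda>s t. (s, t) \<in> odd_adj E m) ws" and covers: "set ws = S"
  shows "maps_onto
    (lot_group {0..<length ws} (path_edges (length ws) (\<lambda>i. m {ws ! i, ws ! Suc i} div 2)))
    (coxeter_group S E m)"
proof -
  define n where "n = length ws"
  define K where "K = (\<lambda>i. m {ws ! i, ws ! Suc i} div 2)"
  define g where "g i = coxeter_gen S E m (ws ! i)" for i
  interpret W: group "coxeter_group S E m"
    by (rule group_coxeter_group)
  have ws_S: "ws ! i \<in> S" if "i < n" for i
    using that covers by (auto simp: n_def)
  have g: "g ` {0..<n} \<subseteq> carrier (coxeter_group S E m)"
    using ws_S by (auto simp: g_def coxeter_gen_in_carrier)
  have g_involution: "g j \<otimes>\<^bsub>coxeter_group S E m\<^esub> g j = \<one>\<^bsub>coxeter_group S E m\<^esub>" if "j < n" for j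
    using ws_S[OF that] by (simp add: g_def coxeter_gen_involution)
  have "eval_word (coxeter_group S E m) g r = \<one>\<^bsub>coxeter_group S E m\<^esub>"
    if "r \<in> lot_relator ` path_edges n K" for r
  proof -
    obtain i where "i < n - 1" and r: "r = lot_relator (i, path_label n (K i) i, Suc i)"
      using \<open>r \<in> lot_relator ` path_edges n K\<close> by (auto simp: path_edges_def)
    then have i: "Suc i < n"
      by simp
    have "(ws ! i, ws ! Suc i) \<in> odd_adj E m"
      using successively_nth[OF walk] i by (simp add: n_def)
    then have e: "{ws ! i, ws ! Suc i} \<in> E" and "odd (m {ws ! i, ws ! Suc i})"
      by (simp_all add: odd_adj_def)
    then have "m {ws ! i, ws ! Suc i} = Suc (2 * K i)"
      unfolding K_def by presburger
    with coxeter_gen_braid[OF cg e HOL.refl] show ?thesis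
      unfolding r using g g_involution i by (intro W.eval_path_relator) (auto simp: g_def)
  qed
  moreover have "coxeter_gen S E m ` S \<subseteq> g ` {0..<n}"
    using covers by (auto simp: g_def n_def in_set_conv_nth)
  ultimately have "maps_onto (pres_group {0..<n} (lot_relator ` path_edges n K)) (coxeter_group S E m)"
    using g unfolding coxeter_group_def by (intro pres_group_maps_onto)
  then show ?thesis
    unfolding lot_group_def n_def [symmetric] K_def [symmetric] .
qed

theorem theorem3p2:
  fixes S :: "'x set" and E :: "'x set set" and m :: "'x set \<Rightarrow> nat"
  assumes "coxeter_graph S E m"
    and "abelianization (coxeter_group S E m) \<cong> integer_mod_group 2"
  shows "\<exists>(V :: nat set) Ed. is_LOT V Ed \<and> lot_coxeter_type Ed \<and> lot_prime V Ed \<and>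
           maps_onto (lot_group V Ed) (coxeter_group S E m)"
proof -
  obtain n K where "n \<ge> 1" "maps_onto (lot_group {0..<n} (path_edges n K)) (coxeter_group S E m)"
  proof (cases "S = {}")
    case True
    show thesis
      by (rule that[of 1 "\<lambda>_. 0"]) (simp_all add: True lot_group_def coxeter_group_def
          maps_onto_pres_group_empty)
  next
    case False
    have "finite S" "odd_adj E m \<subseteq> S \<times> S"
      using assms(1) by (auto simp: coxeter_graph_def odd_adj_def)
    then obtain ws where walk: "successively (\<lambda>s t. (s, t) \<in> odd_adj E m) ws"
      and covers: "set ws = S"
      using connected_imp_covering_walk[OF _ False _ odd_adj_connected[OF assms]] by blast
    then have "length ws \<ge> 1"
      using False by (cases ws) auto
    then show thesis
      using that path_lot_maps_onto_coxeter_group[OF assms(1) walk covers] by blast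
  qed
  then show ?thesis
    using path_is_LOT path_edges_coxeter_type path_lot_prime by blast
qed

end
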